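(* Suppose Assumption 3 holds and $\alpha>0$ (which holds for almost all data). Let $\ell$ be the exponential loss $\ell(x)=e^{-x}$ or the logistic loss $\ell(x)=\ln(1+e^{-x})$, and let $K=\frac{1+\ln n}{\alpha}$ in the exponential case and $K=\frac{2n}{e\alpha}$ in the logistic case. Then for every $w\in\mathbb{R}^d$ with $\langle w,\bar u\rangle\ge0$ and $\|\Pi_\perp w\|> K$, we have $\langle\Pi_\perp w,\nabla\mathcal{R}(w)\rangle\ge0$.
   Context: Data $(x_i,y_i)_{i=1}^n$ with $x_i\in\mathbb{R}^d$, $\|x_i\|\le 1$, $y_i\in\{-1,+1\}$, $z_i:=y_ix_i$, linearly separable. $\gamma:=\max_{\|u\|=1}\min_i\langle u,z_i\rangle>0$ and $\bar u$ is the unique unit vector attaining it. $S$ is the set of indices $i$ with $\langle\bar u,z_i\rangle=\gamma$ (support vectors). Assumption 3: $\{z_i:i\in S\}$ spans $\mathbb{R}^d$. $\alpha:=\min_{\|\xi\|=1,\ \xi\perp\bar u}\max_{i\in S}\langle\xi,z_i\rangle$. For $w\in\mathbb{R}^d$, $\mathcal{R}(w):=\frac1n\sum_{i=1}^n\ell(\langle w,z_i\rangle)$, so $\nabla\mathcal{R}(w)=\frac1n\sum_i\ell'(\langle w,z_i\rangle)z_i$. $\Pi_\perp$ is the orthogonal projection onto the orthogonal complement of $\mathrm{span}(\bar u)$. *)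

theory Defs
  imports "HOL-Analysis.Analysis"
begin

datatype loss_kind = ExpLoss | LogisticLoss

fun ell :: "loss_kind \<Rightarrow> real \<Rightarrow> real" where
  "ell ExpLoss t = exp (- t)"
| "ell LogisticLoss t = ln (1 + exp (- t))"

fun ell' :: "loss_kind \<Rightarrow> real \<Rightarrow> real" where
  "ell' ExpLoss t = - exp (- t)"
| "ell' LogisticLoss t = - exp (- t) / (1 + exp (- t))"

lemma ell'_is_derivative: "(ell L has_real_derivative ell' L t) (at t)"
proof (cases L)
  case ExpLoss
  have "((\<lambda>t. exp (- t)) has_real_derivative exp (- t) * (- 1)) (at t)"
    by (auto intro!: derivative_eq_intros)
  moreover have "ell ExpLoss = (\<lambda>t. exp (- t))" by (rule ext) simp
  ultimately show ?thesis using ExpLoss by simp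
next
  case LogisticLoss
  have "((\<lambda>t. ln (1 + exp (- t))) has_real_derivative (exp (- t) * (- 1)) / (1 + exp (- t))) (at t)"
    by (auto intro!: derivative_eq_intros simp: add_pos_pos)
  moreover have "ell LogisticLoss = (\<lambda>t. ln (1 + exp (- t)))" by (rule ext) simp
  ultimately show ?thesis using LogisticLoss by simp
qed

definition zvec :: "(nat \<Rightarrow> 'a::real_vector) \<Rightarrow> (nat \<Rightarrow> real) \<Rightarrow> nat \<Rightarrow> 'a" where
  "zvec x y i = y i *\<^sub>R x i"

definition margin :: "nat \<Rightarrow> (nat \<Rightarrow> 'a::real_inner) \<Rightarrow> 'a \<Rightarrow> real" where
  "margin n z u = Min ((\<lambda>i. inner u (z i)) ` {..<n})"

definition risk :: "loss_kind \<Rightarrow> nat \<Rightarrow> (nat \<Rightarrow> 'a::real_inner) \<Rightarrow> 'a \<Rightarrow> real" where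
  "risk L n z w = (1 / real n) * (\<Sum>i<n. ell L (inner w (z i)))"

definition risk_grad :: "loss_kind \<Rightarrow> nat \<Rightarrow> (nat \<Rightarrow> 'a::real_inner) \<Rightarrow> 'a \<Rightarrow> 'a" where
  "risk_grad L n z w = (1 / real n) *\<^sub>R (\<Sum>i<n. ell' L (inner w (z i)) *\<^sub>R z i)"

text \<open>Orthogonal projection onto the orthogonal complement of span(u), u a unit vector.\<close>
definition proj_perp :: "'a::real_inner \<Rightarrow> 'a \<Rightarrow> 'a" where
  "proj_perp u w = w - inner w u *\<^sub>R u"

definition support_set :: "nat \<Rightarrow> (nat \<Rightarrow> 'a::real_inner) \<Rightarrow> 'a \<Rightarrow> real \<Rightarrow> nat set" where
  "support_set n z u g = {i. i < n \<and> inner u (z i) = g}"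

definition alpha_const :: "nat \<Rightarrow> (nat \<Rightarrow> 'a::real_inner) \<Rightarrow> 'a \<Rightarrow> real \<Rightarrow> real" where
  "alpha_const n z u g =
     Inf ((\<lambda>\<xi>. Max ((\<lambda>i. inner \<xi> (z i)) ` support_set n z u g)) ` {\<xi>. norm \<xi> = 1 \<and> inner \<xi> u = 0})"

fun K_const :: "loss_kind \<Rightarrow> nat \<Rightarrow> real \<Rightarrow> real" where
  "K_const ExpLoss n a = (1 + ln (real n)) / a"
| "K_const LogisticLoss n a = 2 * real n / (exp 1 * a)"

end

theory Submission
  imports Defs
begin

text \<open>Write \<open>w = v + c \<bar>u\<close> with \<open>v = \<Pi>\<^sub>\<perp> w\<close> and \<open>c \<ge> 0\<close>, and put \<open>p\<^sub>i = \<langle>v, z\<^sub>i\<rangle>\<close>. Then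
  \<open>\<langle>w, z\<^sub>i\<rangle> \<ge> p\<^sub>i + c\<gamma>\<close>, and \<open>-\<langle>v, \<nabla>\<R>(w)\<rangle>\<close> is the average of the terms \<open>-\<ell>'(\<langle>w, z\<^sub>i\<rangle>) p\<^sub>i\<close>.
  Since \<open>-\<ell>'(a) \<le> e\<^sup>-\<^sup>a\<close> and \<open>p e\<^sup>-\<^sup>p \<le> 1/e\<close>, every term is at most \<open>e\<^sup>-\<^sup>c\<^sup>\<gamma>/e\<close>. On the other hand the
  definition of \<open>\<alpha>\<close>, applied to the unit direction \<open>-v/\<parallel>v\<parallel>\<close>, yields a support vector \<open>z\<^sub>k\<close> with
  \<open>p\<^sub>k \<le> -\<alpha>\<parallel>v\<parallel>\<close> and \<open>\<langle>w, z\<^sub>k\<rangle> = p\<^sub>k + c\<gamma>\<close>; once \<open>\<parallel>v\<parallel> > K\<close> its term is negative enough to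
  outweigh the other \<open>n - 1\<close> terms.\<close>

lemma mult_exp_minus_le: "(p::real) * exp (- p) \<le> exp (- 1)"
proof -
  have "p \<le> exp (p - 1)" using exp_ge_add_one_self[of "p - 1"] by simp
  hence "p * exp (- p) \<le> exp (p - 1) * exp (- p)" by (simp add: mult_right_mono)
  also have "\<dots> = exp (- 1)" by (simp add: exp_add[symmetric])
  finally show ?thesis .
qed

lemma ell'_nonpos: "ell' L t \<le> 0"
  by (cases L) (auto simp: add_pos_pos)

lemma minus_ell'_le_exp: "- ell' L t \<le> exp (- t)"
  by (cases L) (auto simp: divide_le_eq add_pos_pos)

lemma minus_ell'_mult_le:
  assumes "p + C \<le> a" "0 \<le> C"
  shows "- ell' L a * p \<le> exp (- C) * exp (- 1)"
proof (cases "p \<le> 0")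
  case True
  then have "- ell' L a * p \<le> 0" using ell'_nonpos[of L a] by (simp add: mult_nonpos_nonpos)
  also have "0 \<le> exp (- C) * exp (- 1)" by simp
  finally show ?thesis .
next
  case False
  have "- ell' L a * p \<le> exp (- a) * p"
    using minus_ell'_le_exp[of L a] False by (intro mult_right_mono) auto
  also have "\<dots> \<le> exp (- C - p) * p" using assms False by (intro mult_right_mono) auto
  also have "\<dots> = exp (- C) * (p * exp (- p))" by (simp add: exp_diff exp_minus field_simps)
  also have "\<dots> \<le> exp (- C) * exp (- 1)" using mult_exp_minus_le[of p] by (intro mult_left_mono) auto
  finally show ?thesis .
qed

lemma exp_loss_term_le:
  assumes "0 \<le> s" "p \<le> - s"
  shows "- ell' ExpLoss (p + C) * p \<le> - exp (- C) * (s * exp s)"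
proof -
  have "s * exp s \<le> (- p) * exp (- p)" using assms by (intro mult_mono) auto
  then have "exp (- C) * (s * exp s) \<le> exp (- C) * ((- p) * exp (- p))" by (rule mult_left_mono) simp
  moreover have "- ell' ExpLoss (p + C) * p = - (exp (- C) * ((- p) * exp (- p)))"
    by (simp add: exp_diff exp_minus field_simps)
  ultimately show ?thesis by linarith
qed

lemma logistic_loss_term_le:
  assumes "0 \<le> C" "0 \<le> s" "p \<le> - s"
  shows "- ell' LogisticLoss (p + C) * p \<le> - exp (- C) * (s / 2)"
proof -
  define m where "m = exp (- (p + C))"
  define E where "E = exp (- C)"
  have "E \<le> m" "E \<le> 1" "0 < m" using assms unfolding m_def E_def by auto
  moreover have "E * m \<le> m" using \<open>E \<le> 1\<close> \<open>0 < m\<close> by (simp add: mult_left_le_one_le)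
  moreover have "E * (1 + m) = E + E * m" by (simp add: algebra_simps)
  ultimately have "E * (1 + m) \<le> 2 * m" by linarith
  then have weight: "E / 2 \<le> m / (1 + m)" using \<open>0 < m\<close> by (simp add: field_simps)
  have "- ell' LogisticLoss (p + C) * p = m / (1 + m) * p" by (simp add: m_def)
  also have "\<dots> \<le> E / 2 * p" using weight assms by (intro mult_right_mono_neg) auto
  also have "\<dots> \<le> E / 2 * (- s)" using assms by (intro mult_left_mono) (auto simp: E_def)
  finally show ?thesis by (simp add: E_def)
qed

lemma K_const_nonneg: "0 < n \<Longrightarrow> 0 < \<alpha> \<Longrightarrow> 0 \<le> K_const L n \<alpha>"
  by (cases L) auto

lemma support_term_dominates:
  assumes "0 < n" "0 \<le> C" "0 < \<alpha>" "K_const L n \<alpha> < r" "p \<le> - \<alpha> * r"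
  shows "- ell' L (p + C) * p + real (n - 1) * (exp (- C) * exp (- 1)) \<le> 0"
proof -
  define s where "s = \<alpha> * r"
  have "0 \<le> s" using K_const_nonneg[of n \<alpha> L] assms by (simp add: s_def)
  have "real (n - 1) \<le> real n * exp 1"
    using mult_left_mono[of 1 "exp 1" "real n"] by simp
  then have n_le: "real (n - 1) * exp (- 1) \<le> real n" by (simp add: exp_minus field_simps)
  obtain \<phi> where term_le: "- ell' L (p + C) * p \<le> - exp (- C) * \<phi>"
    and bound: "real (n - 1) * exp (- 1) \<le> \<phi>"
  proof (cases L)
    case ExpLoss
    then have s_gt: "1 + ln (real n) < s" using assms by (simp add: s_def field_simps)
    have "0 \<le> ln (real n)" using \<open>0 < n\<close> by simp
    with s_gt have "1 \<le> s" by linarith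
    have "exp 1 * real n = exp (1 + ln (real n))" using \<open>0 < n\<close> by (simp add: exp_add)
    also have "\<dots> \<le> exp s" using s_gt by simp
    also have "\<dots> \<le> s * exp s" using \<open>1 \<le> s\<close> mult_right_mono[of 1 s "exp s"] by simp
    finally have "real n \<le> s * exp s" using mult_right_mono[of 1 "exp 1" "real n"] by simp
    with n_le have "real (n - 1) * exp (- 1) \<le> s * exp s" by linarith
    moreover have "- ell' L (p + C) * p \<le> - exp (- C) * (s * exp s)"
      using ExpLoss exp_loss_term_le \<open>1 \<le> s\<close> assms(5) by (simp add: s_def)
    ultimately show thesis by (rule that[rotated])
  next
    case LogisticLoss
    then have "2 * real n < s * exp 1" using assms by (simp add: s_def field_simps)
    then have "real (n - 1) * exp (- 1) \<le> s / 2" using n_le by (simp add: exp_minus field_simps)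
    moreover have "- ell' L (p + C) * p \<le> - exp (- C) * (s / 2)"
      using LogisticLoss logistic_loss_term_le[OF \<open>0 \<le> C\<close> \<open>0 \<le> s\<close>] assms(5) by (simp add: s_def)
    ultimately show thesis by (rule that[rotated])
  qed
  from mult_left_mono[OF bound, of "exp (- C)"]
  have "real (n - 1) * (exp (- C) * exp (- 1)) \<le> exp (- C) * \<phi>" by (simp add: ac_simps)
  with term_le show ?thesis by linarith
qed

lemma sum_nonpos_by_dominant_term:
  fixes t :: "nat \<Rightarrow> real"
  assumes "\<And>i. i < n \<Longrightarrow> t i \<le> B" "t k + real (n - 1) * B \<le> 0" "k < n"
  shows "(\<Sum>i<n. t i) \<le> 0"
proof -
  have "(\<Sum>i<n. t i) = t k + (\<Sum>i\<in>{..<n} - {k}. t i)" using assms(3) by (simp add: sum.remove)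
  also have "(\<Sum>i\<in>{..<n} - {k}. t i) \<le> real (card ({..<n} - {k})) * B"
    using assms(1) by (intro sum_bounded_above) auto
  also have "card ({..<n} - {k}) = n - 1" using assms(3) by simp
  finally show ?thesis using assms(2) by simp
qed

lemma inner_risk_grad_nonneg:
  fixes z :: "nat \<Rightarrow> 'a::real_inner"
  assumes "0 < n" "0 \<le> C" "0 < \<alpha>" "K_const L n \<alpha> < norm v"
    and lower: "\<And>i. i < n \<Longrightarrow> inner v (z i) + C \<le> inner w (z i)"
    and "k < n" "inner w (z k) = inner v (z k) + C" "inner v (z k) \<le> - \<alpha> * norm v"
  shows "0 \<le> inner v (risk_grad L n z w)"
proof -
  define t where "t i = - ell' L (inner w (z i)) * inner v (z i)" for i
  define B where "B = exp (- C) * exp (- 1)"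
  have "t i \<le> B" if "i < n" for i
    unfolding t_def B_def using lower[OF that] \<open>0 \<le> C\<close> by (rule minus_ell'_mult_le)
  moreover have "t k + real (n - 1) * B \<le> 0"
    unfolding t_def B_def \<open>inner w (z k) = inner v (z k) + C\<close>
    using assms by (intro support_term_dominates)
  ultimately have "(\<Sum>i<n. t i) \<le> 0" using \<open>k < n\<close> by (rule sum_nonpos_by_dominant_term)
  moreover have "inner v (risk_grad L n z w) = - (\<Sum>i<n. t i) / real n"
    unfolding risk_grad_def t_def by (simp add: inner_sum_right sum_negf)
  ultimately show ?thesis using \<open>0 < n\<close> by (simp add: divide_nonpos_pos)
qed

lemma inner_eq_proj_perp_add: "inner w a = inner (proj_perp u w) a + inner w u * inner u a"
  by (simp add: proj_perp_def inner_diff_left)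

lemma inner_proj_perp_unit: "norm u = 1 \<Longrightarrow> inner (proj_perp u w) u = 0"
  by (simp add: proj_perp_def inner_diff_left dot_square_norm)

lemma margin_le_inner: "i < n \<Longrightarrow> margin n z u \<le> inner u (z i)"
  unfolding margin_def by (intro Min_le) auto

lemma support_set_margin_nonempty: "0 < n \<Longrightarrow> support_set n z u (margin n z u) \<noteq> {}"
proof -
  assume "0 < n"
  then have "margin n z u \<in> (\<lambda>i. inner u (z i)) ` {..<n}" unfolding margin_def by (intro Min_in) auto
  then show ?thesis unfolding support_set_def by auto
qed

lemma alpha_const_le_Max:
  fixes z :: "nat \<Rightarrow> 'a::real_inner"
  assumes "support_set n z u g \<noteq> {}" "norm \<xi> = 1" "inner \<xi> u = 0"
  shows "alpha_const n z u g \<le> Max ((\<lambda>i. inner \<xi> (z i)) ` support_set n z u g)"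
proof -
  define S where "S = support_set n z u g"
  have "finite S" unfolding S_def support_set_def by auto
  obtain j where "j \<in> S" using assms(1) unfolding S_def by auto
  have "- norm (z j) \<le> Max ((\<lambda>i. inner e (z i)) ` S)" if "norm e = 1" for e :: 'a
  proof -
    have "- norm (z j) \<le> inner e (z j)" using Cauchy_Schwarz_ineq2[of e "z j"] that by simp
    also have "\<dots> \<le> Max ((\<lambda>i. inner e (z i)) ` S)" using \<open>j \<in> S\<close> \<open>finite S\<close> by (intro Max_ge) auto
    finally show ?thesis .
  qed
  then have "bdd_below ((\<lambda>e. Max ((\<lambda>i. inner e (z i)) ` S)) ` {e. norm e = 1 \<and> inner e u = 0})"
    by (intro bdd_belowI2[where m = "- norm (z j)"]) auto
  then show ?thesis
    unfolding alpha_const_def S_def[symmetric] using assms(2,3) by (intro cInf_lower) auto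
qed

lemma support_vector_against:
  fixes z :: "nat \<Rightarrow> 'a::real_inner"
  assumes "support_set n z u g \<noteq> {}" "inner v u = 0" "v \<noteq> 0"
  obtains k where "k \<in> support_set n z u g" "inner v (z k) \<le> - alpha_const n z u g * norm v"
proof -
  define \<xi> where "\<xi> = (- 1 / norm v) *\<^sub>R v"
  have "norm \<xi> = 1" "inner \<xi> u = 0" using assms(2,3) by (auto simp: \<xi>_def)
  have "finite (support_set n z u g)" unfolding support_set_def by auto
  then have "Max ((\<lambda>i. inner \<xi> (z i)) ` support_set n z u g) \<in> (\<lambda>i. inner \<xi> (z i)) ` support_set n z u g"
    using assms(1) by (intro Max_in) auto
  then obtain k where k: "k \<in> support_set n z u g"
    and "Max ((\<lambda>i. inner \<xi> (z i)) ` support_set n z u g) = inner \<xi> (z k)"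
    by auto
  then have "alpha_const n z u g \<le> - inner v (z k) / norm v"
    using alpha_const_le_Max[OF assms(1) \<open>norm \<xi> = 1\<close> \<open>inner \<xi> u = 0\<close>] by (simp add: \<xi>_def)
  then have "inner v (z k) \<le> - alpha_const n z u g * norm v"
    using assms(3) by (simp add: field_simps)
  with k show thesis by (rule that)
qed

theorem mainTheorem7:
  fixes n :: nat and x :: "nat \<Rightarrow> 'a::euclidean_space" and y :: "nat \<Rightarrow> real"
    and ubar w :: 'a and \<gamma> :: real and L :: loss_kind
  assumes n_pos: "n > 0"
    and x_bdd: "\<forall>i<n. norm (x i) \<le> 1"
    and y_sign: "\<forall>i<n. y i = 1 \<or> y i = -1"
    and ubar_unit: "norm ubar = 1"
    and ubar_max: "\<forall>u. norm u = 1 \<longrightarrow> margin n (zvec x y) u \<le> margin n (zvec x y) ubar"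
    and gamma_def: "\<gamma> = margin n (zvec x y) ubar"
    and separable: "\<gamma> > 0"
    and assumption3: "span (zvec x y ` support_set n (zvec x y) ubar \<gamma>) = UNIV"
    and alpha_pos: "alpha_const n (zvec x y) ubar \<gamma> > 0"
    and w_side: "inner w ubar \<ge> 0"
    and w_far: "norm (proj_perp ubar w) > K_const L n (alpha_const n (zvec x y) ubar \<gamma>)"
  shows "inner (proj_perp ubar w) (risk_grad L n (zvec x y) w) \<ge> 0"
proof -
  define z where "z = zvec x y"
  define v where "v = proj_perp ubar w"
  define c where "c = inner w ubar"
  define \<alpha> where "\<alpha> = alpha_const n z ubar \<gamma>"
  have inner_w: "inner w (z i) = inner v (z i) + c * inner ubar (z i)" for i
    unfolding v_def c_def by (rule inner_eq_proj_perp_add)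
  have far: "K_const L n \<alpha> < norm v" using w_far by (simp add: v_def \<alpha>_def z_def)
  moreover have "0 \<le> K_const L n \<alpha>" using K_const_nonneg n_pos alpha_pos by (simp add: \<alpha>_def z_def)
  ultimately have "v \<noteq> 0" by auto
  have "support_set n z ubar \<gamma> \<noteq> {}"
    using support_set_margin_nonempty[OF n_pos] by (simp add: gamma_def z_def)
  moreover have "inner v ubar = 0" using ubar_unit by (simp add: v_def inner_proj_perp_unit)
  ultimately obtain k where k: "k \<in> support_set n z ubar \<gamma>" "inner v (z k) \<le> - \<alpha> * norm v"
    unfolding \<alpha>_def using \<open>v \<noteq> 0\<close> by (rule support_vector_against)
  have lower: "inner v (z i) + c * \<gamma> \<le> inner w (z i)" if "i < n" for i
  proof -
    have "c * \<gamma> \<le> c * inner ubar (z i)"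
      unfolding c_def gamma_def z_def using margin_le_inner[OF that, of "zvec x y" ubar] w_side
      by (rule mult_left_mono)
    then show ?thesis by (simp add: inner_w)
  qed
  have "k < n" "inner w (z k) = inner v (z k) + c * \<gamma>"
    using k(1) by (simp_all add: support_set_def inner_w)
  moreover have "0 \<le> c * \<gamma>" using w_side separable by (simp add: c_def)
  ultimately have "0 \<le> inner v (risk_grad L n z w)"
    using inner_risk_grad_nonneg[OF n_pos _ _ far lower] alpha_pos k(2) by (simp add: \<alpha>_def z_def)
  then show ?thesis by (simp add: v_def z_def)
qed

end
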